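(* Let $\mathcal B$ be the category with one object whose only endomorphisms are the identity $i$ and an idempotent $e\ne i$ (so $e\circ e=i\circ e=e\circ i=e$). Let $\mathcal E$ have objects $\mathbb N\cup\{\infty\}$ (with the usual order and $\infty$ largest) and hom-sets $\mathcal E(X,Y)=\{i,e\}$ if $X\le Y$, $\mathcal E(X,Y)=\{e\}$ if $Y<X<\infty$, $\mathcal E(X,Y)=\varnothing$ if $X=\infty$ and $Y<\infty$, with composition as in $\mathcal B$, and let $|\text{-}|:\mathcal E\to\mathcal B$ be the identity on morphisms. Then $\mathcal E$ is a concrete category over $\mathcal B$, and the $\mathcal Q_{\mathcal B}$-category $\overline{\mathcal E}$ is tensored and order-complete but not conically cocomplete.
   Context: For a concrete category (faithful functor $|\text{-}|:\mathcal E\to\mathcal B$), $\overline{\mathcal E}(X,Y)$ is the set of maps $|X|\to|Y|$ of the form $|f'|$, $f':X\to Y$. For subsets $\mathbf f\subseteq\mathcal B(S,T)$, $\mathbf h\subseteq\mathcal B(S,U)$ put $\mathbf h\swarrow\mathbf f=\{g\mid\forall f\in\mathbf f: g\circ f\in\mathbf h\}$. $\overline{\mathcal E}$ is tensored if for every $X$ and every subset $\mathbf u\subseteq\mathcal B(|X|,T)$ there is $Y$ with $|Y|=T$ and $\overline{\mathcal E}(Y,Z)=\overline{\mathcal E}(X,Z)\swarrow\mathbf u$ for all $Z$. The fibre $\mathcal E_T$ is the class of $Y$ with $|Y|=T$ preordered by $Y\le Y'$ iff $1_T\in\overline{\mathcal E}(Y,Y')$; $\overline{\mathcal E}$ is order-complete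 if every fibre has joins of all subclasses. A presheaf of extent $T$ is a family $\varphi_X\subseteq\mathcal B(|X|,T)$ with $\varphi_X\circ\overline{\mathcal E}(X',X)\subseteq\varphi_{X'}$; a supremum is $Y$ with $|Y|=T$ and $\overline{\mathcal E}(Y,Z)=\bigcap_X\overline{\mathcal E}(X,Z)\swarrow\varphi_X$ for all $Z$; $\overline{\mathcal E}$ is conically cocomplete if for every family $(Y_i)$ in a fibre $\mathcal E_T$ the presheaf $X\mapsto\bigcup_i\overline{\mathcal E}(X,Y_i)$ has a supremum. *)

theory Defs
  imports Main "HOL-Library.Extended_Nat"
begin

text \<open>The base category B is given by hom-sets Bhom S T (sets of morphisms of type 'm),
  composition cmp g f (meaning g after f) and identities ident S.
  A concrete category E over B is given by its objects (type 'o), the underlying-object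
  map U (written |X|), and its hom-sets Ehom X Y, regarded as sets of B-morphisms
  (the faithful functor being the identity on morphisms); thus Ehom X Y is exactly
  the set overline-E(X,Y).\<close>

definition is_category :: "('b \<Rightarrow> 'b \<Rightarrow> 'm set) \<Rightarrow> ('m \<Rightarrow> 'm \<Rightarrow> 'm) \<Rightarrow> ('b \<Rightarrow> 'm) \<Rightarrow> bool" where
  "is_category Bhom cmp ident \<longleftrightarrow>
     (\<forall>S. ident S \<in> Bhom S S) \<and>
     (\<forall>S T V f g. f \<in> Bhom S T \<longrightarrow> g \<in> Bhom T V \<longrightarrow> cmp g f \<in> Bhom S V) \<and>
     (\<forall>S T V W f g h. f \<in> Bhom S T \<longrightarrow> g \<in> Bhom T V \<longrightarrow> h \<in> Bhom V W \<longrightarrow>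
         cmp h (cmp g f) = cmp (cmp h g) f) \<and>
     (\<forall>S T f. f \<in> Bhom S T \<longrightarrow> cmp (ident T) f = f \<and> cmp f (ident S) = f)"

definition is_concrete ::
  "('b \<Rightarrow> 'b \<Rightarrow> 'm set) \<Rightarrow> ('m \<Rightarrow> 'm \<Rightarrow> 'm) \<Rightarrow> ('b \<Rightarrow> 'm) \<Rightarrow> ('o \<Rightarrow> 'b) \<Rightarrow> ('o \<Rightarrow> 'o \<Rightarrow> 'm set) \<Rightarrow> bool" where
  "is_concrete Bhom cmp ident U Ehom \<longleftrightarrow>
     is_category Bhom cmp ident \<and>
     (\<forall>X Y. Ehom X Y \<subseteq> Bhom (U X) (U Y)) \<and>
     (\<forall>X. ident (U X) \<in> Ehom X X) \<and>
     (\<forall>X Y Z f g. f \<in> Ehom X Y \<longrightarrow> g \<in> Ehom Y Z \<longrightarrow> cmp g f \<in> Ehom X Z)"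

definition lift_div :: "('m \<Rightarrow> 'm \<Rightarrow> 'm) \<Rightarrow> 'm set \<Rightarrow> 'm set \<Rightarrow> 'm set \<Rightarrow> 'm set" where
  "lift_div cmp BTU h fs = {g \<in> BTU. \<forall>f\<in>fs. cmp g f \<in> h}"

definition tensored ::
  "('b \<Rightarrow> 'b \<Rightarrow> 'm set) \<Rightarrow> ('m \<Rightarrow> 'm \<Rightarrow> 'm) \<Rightarrow> ('o \<Rightarrow> 'b) \<Rightarrow> ('o \<Rightarrow> 'o \<Rightarrow> 'm set) \<Rightarrow> bool" where
  "tensored Bhom cmp U Ehom \<longleftrightarrow>
     (\<forall>X T u. u \<subseteq> Bhom (U X) T \<longrightarrow>
        (\<exists>Y. U Y = T \<and> (\<forall>Z. Ehom Y Z = lift_div cmp (Bhom T (U Z)) (Ehom X Z) u)))"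

definition fibre_le :: "('b \<Rightarrow> 'm) \<Rightarrow> ('o \<Rightarrow> 'b) \<Rightarrow> ('o \<Rightarrow> 'o \<Rightarrow> 'm set) \<Rightarrow> 'b \<Rightarrow> 'o \<Rightarrow> 'o \<Rightarrow> bool" where
  "fibre_le ident U Ehom T Y Y' \<longleftrightarrow> ident T \<in> Ehom Y Y'"

definition order_complete ::
  "('b \<Rightarrow> 'm) \<Rightarrow> ('o \<Rightarrow> 'b) \<Rightarrow> ('o \<Rightarrow> 'o \<Rightarrow> 'm set) \<Rightarrow> bool" where
  "order_complete ident U Ehom \<longleftrightarrow>
     (\<forall>T S. S \<subseteq> {Y. U Y = T} \<longrightarrow>
        (\<exists>J. U J = T \<and>
             (\<forall>Y'. U Y' = T \<longrightarrow>
                (fibre_le ident U Ehom T J Y' \<longleftrightarrow> (\<forall>Y\<in>S. fibre_le ident U Ehom T Y Y')))))"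

definition presheaf ::
  "('b \<Rightarrow> 'b \<Rightarrow> 'm set) \<Rightarrow> ('m \<Rightarrow> 'm \<Rightarrow> 'm) \<Rightarrow> ('o \<Rightarrow> 'b) \<Rightarrow> ('o \<Rightarrow> 'o \<Rightarrow> 'm set) \<Rightarrow> 'b \<Rightarrow> ('o \<Rightarrow> 'm set) \<Rightarrow> bool" where
  "presheaf Bhom cmp U Ehom T \<phi> \<longleftrightarrow>
     (\<forall>X. \<phi> X \<subseteq> Bhom (U X) T) \<and>
     (\<forall>X X' f g. f \<in> \<phi> X \<longrightarrow> g \<in> Ehom X' X \<longrightarrow> cmp f g \<in> \<phi> X')"

definition is_supremum ::
  "('b \<Rightarrow> 'b \<Rightarrow> 'm set) \<Rightarrow> ('m \<Rightarrow> 'm \<Rightarrow> 'm) \<Rightarrow> ('o \<Rightarrow> 'b) \<Rightarrow> ('o \<Rightarrow> 'o \<Rightarrow> 'm set) \<Rightarrow> 'b \<Rightarrow> ('o \<Rightarrow> 'm set) \<Rightarrow> 'o \<Rightarrow> bool" where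
  "is_supremum Bhom cmp U Ehom T \<phi> Y \<longleftrightarrow>
     U Y = T \<and> (\<forall>Z. Ehom Y Z = (\<Inter>X. lift_div cmp (Bhom T (U Z)) (Ehom X Z) (\<phi> X)))"

text \<open>Families in a fibre are represented by their sets of members (the presheaf
  X \<mapsto> \<Union>_i Ebar(X,Y_i) only depends on the set {Y_i}).\<close>
definition conically_cocomplete ::
  "('b \<Rightarrow> 'b \<Rightarrow> 'm set) \<Rightarrow> ('m \<Rightarrow> 'm \<Rightarrow> 'm) \<Rightarrow> ('o \<Rightarrow> 'b) \<Rightarrow> ('o \<Rightarrow> 'o \<Rightarrow> 'm set) \<Rightarrow> bool" where
  "conically_cocomplete Bhom cmp U Ehom \<longleftrightarrow>
     (\<forall>T S. S \<subseteq> {Y. U Y = T} \<longrightarrow>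
        (\<exists>Y. is_supremum Bhom cmp U Ehom T (\<lambda>X. \<Union>Y'\<in>S. Ehom X Y') Y))"

datatype bmor = Bi | Be

definition Bhom_ex :: "unit \<Rightarrow> unit \<Rightarrow> bmor set" where
  "Bhom_ex S T = UNIV"

definition comp_ex :: "bmor \<Rightarrow> bmor \<Rightarrow> bmor" where
  "comp_ex g f = (if g = Bi \<and> f = Bi then Bi else Be)"

definition ident_ex :: "unit \<Rightarrow> bmor" where
  "ident_ex S = Bi"

definition U_ex :: "enat \<Rightarrow> unit" where
  "U_ex X = ()"

definition Ehom_ex :: "enat \<Rightarrow> enat \<Rightarrow> bmor set" where
  "Ehom_ex X Y =
     (if X \<le> Y then {Bi, Be}
      else if X < \<infinity> then {Be}   \<comment> \<open>Y < X < \<infinity>\<close>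
      else {})"

end

theory Submission
  imports Defs
begin

text \<open>Since \<open>e\<close> absorbs everything, \<open>h \<swarrow> u\<close> only asks \<open>g \<in> h\<close> when \<open>i \<in> u\<close>
  and \<open>e \<in> h\<close> when \<open>e \<in> u\<close>. Tensors therefore exist: take \<open>X\<close> itself if \<open>i \<in> u\<close>,
  and otherwise the bottom object \<open>0\<close>, or the top \<open>\<infinity>\<close> when \<open>X = \<infinity>\<close> and \<open>u = {e}\<close>.
  The fibre is \<open>\<nat> \<union> {\<infinity>}\<close> with its usual order, a complete lattice. But a supremum
  of all finite objects would need \<open>i : Y \<rightarrow> Z\<close> only for \<open>Z = \<infinity>\<close>, forcing \<open>Y = \<infinity>\<close>,
  and at the same time \<open>e : Y \<rightarrow> 0\<close>, which does not exist out of \<open>\<infinity>\<close>.\<close>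

lemma bmor_set_eqI:
  assumes "Bi \<in> A \<longleftrightarrow> Bi \<in> B" and "Be \<in> A \<longleftrightarrow> Be \<in> B"
  shows "A = (B :: bmor set)"
proof (rule set_eqI)
  fix x show "x \<in> A \<longleftrightarrow> x \<in> B" using assms by (cases x) auto
qed

lemma comp_ex_simps [simp]:
  "comp_ex Bi f = f" "comp_ex g Bi = g" "comp_ex Be f = Be" "comp_ex g Be = Be"
  by (cases f; cases g; simp add: comp_ex_def)+

lemma comp_ex_assoc: "comp_ex h (comp_ex g f) = comp_ex (comp_ex h g) f"
  by (simp add: comp_ex_def)

lemma lift_div_comp_ex:
  "lift_div comp_ex UNIV H u = {g. (Bi \<in> u \<longrightarrow> g \<in> H) \<and> (Be \<in> u \<longrightarrow> Be \<in> H)}"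
proof -
  have "(\<forall>f\<in>u. comp_ex g f \<in> H) \<longleftrightarrow> (Bi \<in> u \<longrightarrow> g \<in> H) \<and> (Be \<in> u \<longrightarrow> Be \<in> H)" for g
    by (metis bmor.exhaust comp_ex_simps(2,4))
  then show ?thesis by (simp add: lift_div_def)
qed

lemma Bi_mem_Ehom_ex_iff [simp]: "Bi \<in> Ehom_ex X Y \<longleftrightarrow> X \<le> Y"
  by (simp add: Ehom_ex_def)

lemma Be_mem_Ehom_ex_iff [simp]: "Be \<in> Ehom_ex X Y \<longleftrightarrow> (X = \<infinity> \<longrightarrow> Y = \<infinity>)"
  by (cases X; cases Y) (simp_all add: Ehom_ex_def)

lemma Be_mem_Ehom_exI: "g \<in> Ehom_ex X Y \<Longrightarrow> Be \<in> Ehom_ex X Y"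
  by (cases g) auto

lemma is_concrete_ex: "is_concrete Bhom_ex comp_ex ident_ex U_ex Ehom_ex"
proof -
  have "comp_ex g f \<in> Ehom_ex X Z" if f: "f \<in> Ehom_ex X Y" and g: "g \<in> Ehom_ex Y Z"
    for X Y Z f g
  proof (cases "f = Bi \<and> g = Bi")
    case True
    then show ?thesis using f g by simp
  next
    case False
    then have "comp_ex g f = Be" by (auto simp: comp_ex_def)
    moreover have "X = \<infinity> \<Longrightarrow> Z = \<infinity>"
      using Be_mem_Ehom_exI [OF f] Be_mem_Ehom_exI [OF g] by auto
    ultimately show ?thesis by auto
  qed
  then show ?thesis
    by (simp add: is_concrete_def is_category_def Bhom_ex_def ident_ex_def comp_ex_assoc)
qed

definition tensor_ex :: "enat \<Rightarrow> bmor set \<Rightarrow> enat" where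
  "tensor_ex X u = (if Bi \<in> u then X else if Be \<in> u \<and> X = \<infinity> then \<infinity> else 0)"

lemma Ehom_ex_tensor_ex:
  "Ehom_ex (tensor_ex X u) Z = lift_div comp_ex UNIV (Ehom_ex X Z) u"
  unfolding lift_div_comp_ex tensor_ex_def
  by (rule bmor_set_eqI) (auto intro: Be_mem_Ehom_exI)

lemma tensored_ex: "tensored Bhom_ex comp_ex U_ex Ehom_ex"
  unfolding tensored_def Bhom_ex_def
  using Ehom_ex_tensor_ex by (metis U_ex_def old.unit.exhaust)

lemma fibre_le_ex_iff: "fibre_le ident_ex U_ex Ehom_ex T Y Y' \<longleftrightarrow> Y \<le> Y'"
  by (simp add: fibre_le_def ident_ex_def)

lemma order_complete_ex: "order_complete ident_ex U_ex Ehom_ex"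
  unfolding order_complete_def fibre_le_ex_iff
  by (metis Sup_le_iff U_ex_def old.unit.exhaust)

lemma Inter_lift_div_finite_objects:
  "(\<Inter>X. lift_div comp_ex UNIV (Ehom_ex X Z) (\<Union>n\<in>range enat. Ehom_ex X n))
     = (if Z = \<infinity> then UNIV else {Be})"
proof -
  have weight: "(\<Union>n\<in>range enat. Ehom_ex X n) = (if X = \<infinity> then {} else UNIV)" for X
    by (cases X) (auto intro!: bmor_set_eqI)
  have "(\<forall>m. enat m \<le> Z) \<longleftrightarrow> Z = \<infinity>"
    by (cases Z) (auto simp: not_le intro: lessI)
  then show ?thesis
    unfolding lift_div_comp_ex weight
    by (intro bmor_set_eqI) (auto split: if_splits)
qed

lemma not_conically_cocomplete_ex: "\<not> conically_cocomplete Bhom_ex comp_ex U_ex Ehom_ex"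
proof
  assume "conically_cocomplete Bhom_ex comp_ex U_ex Ehom_ex"
  moreover have "range enat \<subseteq> {Y. U_ex Y = ()}" by (simp add: U_ex_def)
  ultimately obtain Y where
    "is_supremum Bhom_ex comp_ex U_ex Ehom_ex () (\<lambda>X. \<Union>n\<in>range enat. Ehom_ex X n) Y"
    unfolding conically_cocomplete_def by blast
  then have hom_Y: "Ehom_ex Y Z = (if Z = \<infinity> then UNIV else {Be})" for Z
    unfolding is_supremum_def Bhom_ex_def Inter_lift_div_finite_objects by blast
  have "Bi \<in> Ehom_ex Y Y" by simp
  then have "Y = \<infinity>" using hom_Y [of Y] by (auto split: if_splits)
  moreover have "Be \<in> Ehom_ex Y 0" using hom_Y [of 0] by simp
  ultimately show False by simp
qed

theorem mainTheorem6:
  shows "is_concrete Bhom_ex comp_ex ident_ex U_ex Ehom_ex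
       \<and> tensored Bhom_ex comp_ex U_ex Ehom_ex
       \<and> order_complete ident_ex U_ex Ehom_ex
       \<and> \<not> conically_cocomplete Bhom_ex comp_ex U_ex Ehom_ex"
  using is_concrete_ex tensored_ex order_complete_ex not_conically_cocomplete_ex by blast

end
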